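(* Let $n,\ell$ be positive integers with $\ell\mid n$, let $k=m\ell$ with $0\le m<n/\ell$, and let $p\in(0,1)$. Run the (1+1) EA with mutation rate $p$ on $\mathrm{BLO}_\ell$ starting from an individual $x$ whose first $k$ bits are all ones, whose bits $k+1,\dots,k+\ell$ are uniformly distributed on the $2^\ell-1$ patterns other than all ones, and whose remaining bits are arbitrary. Let $T_k$ be the number of iterations until the fitness first exceeds $m$. Then \[ \mathbb{E}[T_k]=\frac{\mathbb{E}[T']}{(1-p)^k}, \] where $T'$ is the hitting time of $\mathbf{1}^\ell$ for the random walk on $\mathbb{Z}_2^\ell$ with i.i.d. bitwise-flip steps of rate $p$ started uniformly on $\mathbb{Z}_2^\ell\setminus\{\mathbf{1}^\ell\}$; consequently $\mathbb{E}[T_k]=\frac{2^\ell}{2^\ell-1}(1-p)^{-k}\sum_{j=1}^{\ell}\binom{\ell}{j}\frac{1}{1-(1-2p)^j}$.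
   Context: For $x\in\{0,1\}^n$ with $\ell\mid n$, $\mathrm{BLO}_\ell(x)=\sum_{m=1}^{n/\ell}\prod_{i=1}^{m\ell}x_i$. The (1+1) EA with mutation rate $p$: each iteration creates $y$ from the current $x$ by flipping each bit independently with probability $p$, and $y$ replaces $x$ iff $\mathrm{BLO}_\ell(y)\ge\mathrm{BLO}_\ell(x)$. The random walk on $\mathbb{Z}_2^\ell$ (bit strings with coordinatewise addition mod 2) is $X_{t+1}=X_t+W_{t+1}$ with $W_t$ i.i.d., each bit of $W_t$ equal to $1$ independently with probability $p$; $\mathbf{1}^\ell$ is the all-ones string and $T'=\min\{t\ge0:X_t=\mathbf{1}^\ell\}$. *)

theory Defs
  imports "HOL-Probability.Probability"
begin

text \<open>Bit strings of length N are modelled as functions nat \<Rightarrow> bool, bit i (0-indexed)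
  for i < N; bits at positions \<ge> N are kept False.\<close>

text \<open>Generic discrete-time Markov chain with kernel K and initial distribution mu:
  distribution of the trajectory (X_t, ..., X_1, X_0) (newest state first).\<close>
fun traj :: "('s \<Rightarrow> 's pmf) \<Rightarrow> 's pmf \<Rightarrow> nat \<Rightarrow> 's list pmf" where
  "traj K mu 0 = map_pmf (\<lambda>x. [x]) mu"
| "traj K mu (Suc t) = bind_pmf (traj K mu t) (\<lambda>xs. map_pmf (\<lambda>y. y # xs) (K (hd xs)))"

text \<open>P(T > t) for the hitting time T = min{t \<ge> 0. X_t \<in> S}.\<close>
definition not_hit_by :: "('s \<Rightarrow> 's pmf) \<Rightarrow> 's pmf \<Rightarrow> 's set \<Rightarrow> nat \<Rightarrow> real" where
  "not_hit_by K mu S t = measure_pmf.prob (traj K mu t) {xs. set xs \<inter> S = {}}"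

text \<open>Expected hitting time E[T] = sum_{t\<ge>0} P(T > t) (tail-sum formula, in [0,\<infinity>]).\<close>
definition expected_hitting_time :: "('s \<Rightarrow> 's pmf) \<Rightarrow> 's pmf \<Rightarrow> 's set \<Rightarrow> ennreal" where
  "expected_hitting_time K mu S = (\<Sum>t. ennreal (not_hit_by K mu S t))"

definition BLO :: "nat \<Rightarrow> nat \<Rightarrow> (nat \<Rightarrow> bool) \<Rightarrow> nat" where
  "BLO n l x = (\<Sum>j=1..n div l. \<Prod>i<j * l. (if x i then 1 else 0))"

definition mutate :: "nat \<Rightarrow> real \<Rightarrow> (nat \<Rightarrow> bool) \<Rightarrow> (nat \<Rightarrow> bool) pmf" where
  "mutate N p x = map_pmf (\<lambda>w i. x i \<noteq> w i) (Pi_pmf {0..<N} False (\<lambda>_. bernoulli_pmf p))"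

definition ea_step :: "nat \<Rightarrow> nat \<Rightarrow> real \<Rightarrow> (nat \<Rightarrow> bool) \<Rightarrow> (nat \<Rightarrow> bool) pmf" where
  "ea_step n l p x = map_pmf (\<lambda>y. if BLO n l y \<ge> BLO n l x then y else x) (mutate n p x)"

definition blocks :: "nat \<Rightarrow> (nat \<Rightarrow> bool) set" where
  "blocks l = {b. \<forall>i. l \<le> i \<longrightarrow> \<not> b i}"

definition ones :: "nat \<Rightarrow> nat \<Rightarrow> bool" where
  "ones l = (\<lambda>i. i < l)"

definition unif_nonones :: "nat \<Rightarrow> (nat \<Rightarrow> bool) pmf" where
  "unif_nonones l = pmf_of_set (blocks l - {ones l})"

text \<open>Random walk on Z_2^l: X_{t+1} = X_t + W_{t+1}.\<close>
definition rw_step :: "nat \<Rightarrow> real \<Rightarrow> (nat \<Rightarrow> bool) \<Rightarrow> (nat \<Rightarrow> bool) pmf" where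
  "rw_step l p x = mutate l p x"

definition init_ind :: "nat \<Rightarrow> nat \<Rightarrow> nat \<Rightarrow> (nat \<Rightarrow> bool) \<Rightarrow> (nat \<Rightarrow> bool) \<Rightarrow> nat \<Rightarrow> bool" where
  "init_ind n l k z b = (\<lambda>i. if i < k then True else if i < k + l then b (i - k)
                              else if i < n then z i else False)"

end

theory Submission
  imports Defs
begin

text \<open>Both expected hitting times are computed from bounded potentials. If \<open>0 \<le> h \<le> B\<close>
  vanishes on the target and satisfies \<open>h = 1 + K h\<close> off it, then iterating this equation
  writes \<open>h\<close> as the sum of \<open>P(T > s)\<close> over \<open>s < t\<close> plus a remainder at most \<open>B P(T > t)\<close>,
  and \<open>(t + 1) P(T > t) \<le> B\<close>; so \<open>h\<close> is the expected hitting time.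
  For the walk the potential is the Fourier series \<open>\<Sum>\<^sub>T (1 - \<chi>\<^sub>T) / (1 - (1 - 2p)^|T|)\<close> over
  nonempty \<open>T\<close>, because every character \<open>\<chi>\<^sub>T\<close> is an eigenfunction of the step with eigenvalue
  \<open>(1 - 2p)^|T|\<close>; averaging it over the non-ones strings gives the closed formula.
  For the EA at fitness \<open>m\<close>, a mutation is accepted iff it spares the \<open>k\<close> leading ones, which
  happens with probability \<open>(1 - p)^k\<close> independently of its effect on the next block. That block
  therefore performs a lazy copy of the walk, and the walk's potential divided by \<open>(1 - p)^k\<close> is
  a potential for the EA.\<close>

lemma traj_nonempty: "xs \<in> set_pmf (traj K mu t) \<Longrightarrow> xs \<noteq> []"
  by (induction t arbitrary: xs) auto

lemma traj_Suc_first_step: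
  "traj K mu (Suc t) = bind_pmf mu (\<lambda>x. map_pmf (\<lambda>ys. ys @ [x]) (traj K (K x) t))"
proof (induction t)
  case 0
  show ?case by (simp add: map_pmf_def bind_assoc_pmf bind_return_pmf)
next
  case (Suc t)
  have "traj K mu (Suc (Suc t))
      = bind_pmf mu (\<lambda>x. bind_pmf (traj K (K x) t)
          (\<lambda>ys. map_pmf (\<lambda>y. y # ys @ [x]) (K (hd (ys @ [x])))))"
    unfolding traj.simps(2)[of K mu "Suc t"] Suc by (simp only: bind_assoc_pmf bind_map_pmf o_def)
  also have "\<dots> = bind_pmf mu (\<lambda>x. bind_pmf (traj K (K x) t)
          (\<lambda>ys. map_pmf (\<lambda>y. y # ys @ [x]) (K (hd ys))))"
    by (intro bind_pmf_cong refl) (auto dest: traj_nonempty)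
  also have "\<dots> = bind_pmf mu (\<lambda>x. map_pmf (\<lambda>ys. ys @ [x]) (traj K (K x) (Suc t)))"
    by (simp add: map_bind_pmf map_pmf_comp o_def)
  finally show ?case .
qed

lemma measure_bind_pmf:
  "measure_pmf.prob (bind_pmf M N) X = (\<integral>x. measure_pmf.prob (N x) X \<partial>M)"
  unfolding measure_pmf_bind using measurable_measure_pmf[of N]
  by (subst measure_pmf.measure_bind[where N="count_space UNIV"]) auto

lemma integral_bind_pmf_bounded:
  fixes f :: "_ \<Rightarrow> real"
  assumes "\<And>x. \<bar>f x\<bar> \<le> B"
  shows "(\<integral>x. f x \<partial>bind_pmf M N) = (\<integral>x. (\<integral>y. f y \<partial>N x) \<partial>M)"
  unfolding measure_pmf_bind using measurable_measure_pmf[of N] assms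
  by (subst integral_bind[where K="count_space UNIV" and B=B and B'=1])
     (auto simp: measure_pmf.prob_space_axioms prob_space_imp_subprob_space
        measure_pmf.finite_measure_axioms)

lemma expectation_pair_pmf:
  fixes f :: "'a \<times> 'b \<Rightarrow> real"
  assumes "\<And>z. \<bar>f z\<bar> \<le> B"
  shows "measure_pmf.expectation (pair_pmf M N) f
       = measure_pmf.expectation M (\<lambda>a. measure_pmf.expectation N (\<lambda>b. f (a, b)))"
  unfolding pair_pmf_def using assms
  by (simp add: integral_bind_pmf_bounded[where B=B])

text \<open>\<open>killed_iter K S f t x\<close> is the expectation of \<open>f X\<^sub>t\<close> on the event that
  \<open>X\<^sub>0, \<dots>, X\<^sub>t\<^sub>-\<^sub>1 \<notin> S\<close>, for the chain started in \<open>x\<close>.\<close>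
fun killed_iter :: "('s \<Rightarrow> 's pmf) \<Rightarrow> 's set \<Rightarrow> ('s \<Rightarrow> real) \<Rightarrow> nat \<Rightarrow> 's \<Rightarrow> real" where
  "killed_iter K S f 0 x = f x"
| "killed_iter K S f (Suc t) x =
     indicator (-S) x * measure_pmf.expectation (K x) (killed_iter K S f t)"

definition survival :: "('s \<Rightarrow> 's pmf) \<Rightarrow> 's set \<Rightarrow> nat \<Rightarrow> 's \<Rightarrow> real" where
  "survival K S = killed_iter K S (indicator (-S))"

lemma killed_iter_bounds:
  assumes "\<And>x. 0 \<le> f x" and "\<And>x. f x \<le> B"
  shows "0 \<le> killed_iter K S f t x \<and> killed_iter K S f t x \<le> B"
proof (induction t arbitrary: x)
  case 0
  show ?case using assms by simp
next
  case (Suc t)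
  have "0 \<le> measure_pmf.expectation (K x) (killed_iter K S f t)"
    using Suc by (intro integral_nonneg_AE) auto
  moreover have "measure_pmf.expectation (K x) (killed_iter K S f t) \<le> B"
    using Suc by (intro measure_pmf.integral_le_const AE_I2
        measure_pmf.integrable_const_bound[where B=B]) auto
  moreover have "0 \<le> B" using assms order_trans by blast
  ultimately show ?case by (auto simp: indicator_def)
qed

lemma integrable_killed_iter:
  assumes "\<And>x. 0 \<le> f x" and "\<And>x. f x \<le> B"
  shows "integrable (measure_pmf M) (killed_iter K S f t)"
  using killed_iter_bounds[of f B K S t, OF assms]
  by (intro measure_pmf.integrable_const_bound[where B=B] AE_I2) auto

lemma killed_iter_scale:
  "killed_iter K S (\<lambda>x. c * f x) t = (\<lambda>x. c * killed_iter K S f t x)"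
proof (induction t)
  case (Suc t)
  show ?case by (rule ext) (simp add: Suc)
qed simp

lemma survival_bounds: "0 \<le> survival K S t x \<and> survival K S t x \<le> 1"
  unfolding survival_def by (rule killed_iter_bounds) (auto simp: indicator_def)

lemma integrable_survival: "integrable (measure_pmf M) (survival K S t)"
  unfolding survival_def by (rule integrable_killed_iter[where B=1]) (auto simp: indicator_def)

lemma survival_0: "survival K S 0 = indicator (-S)"
  by (simp add: survival_def fun_eq_iff)

lemma survival_Suc:
  "survival K S (Suc t) x = indicator (-S) x * measure_pmf.expectation (K x) (survival K S t)"
  by (simp add: survival_def)

lemma not_hit_by_eq_survival: "not_hit_by K mu S t = measure_pmf.expectation mu (survival K S t)"
proof (induction t arbitrary: mu)
  case 0
  have "not_hit_by K mu S 0 = measure_pmf.prob mu (-S)"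
    unfolding not_hit_by_def by (simp add: vimage_def Compl_eq)
  then show ?case by (simp add: survival_0)
next
  case (Suc t)
  have first_step: "measure_pmf.prob (map_pmf (\<lambda>ys. ys @ [x]) (traj K (K x) t)) {xs. set xs \<inter> S = {}}
       = indicator (-S) x * not_hit_by K (K x) S t" for x
  proof (cases "x \<in> S")
    case True
    then have "(\<lambda>ys. ys @ [x]) -` {xs. set xs \<inter> S = {}} = {}" by auto
    with True show ?thesis by simp
  next
    case False
    then have "(\<lambda>ys. ys @ [x]) -` {xs. set xs \<inter> S = {}} = {xs. set xs \<inter> S = {}}" by auto
    with False show ?thesis by (simp add: not_hit_by_def)
  qed
  show ?case
    unfolding not_hit_by_def traj_Suc_first_step measure_bind_pmf first_step[unfolded not_hit_by_def]
    by (simp add: Suc[unfolded not_hit_by_def] survival_Suc)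
qed

lemma survival_decseq: "decseq (\<lambda>t. survival K S t x)"
  unfolding decseq_Suc_iff
proof (intro allI)
  fix t show "survival K S (Suc t) x \<le> survival K S t x"
  proof (induction t arbitrary: x)
    case 0
    have "measure_pmf.expectation (K x) (survival K S 0) \<le> 1"
      using survival_bounds[of K S 0]
      by (intro measure_pmf.integral_le_const AE_I2 integrable_survival) auto
    then show ?case by (auto simp: survival_Suc survival_0 indicator_def)
  next
    case (Suc t)
    have "measure_pmf.expectation (K x) (survival K S (Suc t))
        \<le> measure_pmf.expectation (K x) (survival K S t)"
      using Suc by (intro integral_mono integrable_survival) auto
    then show ?case unfolding survival_Suc[of K S "Suc t"] survival_Suc[of K S t]
      by (auto simp: indicator_def)
  qed
qed

lemma killed_iter_mono:
  assumes closed: "\<And>x. x \<in> A \<Longrightarrow> set_pmf (K x) \<subseteq> A"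
    and le: "\<And>x. x \<in> A \<Longrightarrow> f x \<le> g x"
    and f: "\<And>x. 0 \<le> f x" "\<And>x. f x \<le> B" and g: "\<And>x. 0 \<le> g x" "\<And>x. g x \<le> B"
  shows "x \<in> A \<Longrightarrow> killed_iter K S f t x \<le> killed_iter K S g t x"
proof (induction t arbitrary: x)
  case (Suc t)
  have "measure_pmf.expectation (K x) (killed_iter K S f t)
      \<le> measure_pmf.expectation (K x) (killed_iter K S g t)"
    using Suc closed
    by (intro integral_mono_AE AE_pmfI integrable_killed_iter[OF f] integrable_killed_iter[OF g]) auto
  then show ?case by (auto simp: indicator_def)
qed (use le in simp)

locale hitting_potential =
  fixes K :: "'s \<Rightarrow> 's pmf" and A S :: "'s set" and h :: "'s \<Rightarrow> real" and B :: real
  assumes closed: "\<And>x. x \<in> A \<Longrightarrow> set_pmf (K x) \<subseteq> A"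
    and nonneg: "\<And>x. 0 \<le> h x" and bounded: "\<And>x. h x \<le> B"
    and vanishes: "\<And>x. x \<in> A \<Longrightarrow> x \<in> S \<Longrightarrow> h x = 0"
    and harmonic: "\<And>x. x \<in> A \<Longrightarrow> x \<notin> S \<Longrightarrow> h x = 1 + measure_pmf.expectation (K x) h"
begin

lemma bound_nonneg: "0 \<le> B"
  using nonneg bounded order_trans by blast

lemma integrable_potential: "integrable (measure_pmf M) h"
  using nonneg bounded by (intro measure_pmf.integrable_const_bound[where B=B] AE_I2) auto

lemma remainder_bounds: "0 \<le> killed_iter K S h t x \<and> killed_iter K S h t x \<le> B"
  by (rule killed_iter_bounds[OF nonneg bounded])

lemma integrable_remainder: "integrable (measure_pmf M) (killed_iter K S h t)"
  by (rule integrable_killed_iter[OF nonneg bounded])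

lemma potential_decomposition:
  "x \<in> A \<Longrightarrow> h x = (\<Sum>s<t. survival K S s x) + killed_iter K S h t x"
proof (induction t arbitrary: x)
  case (Suc t)
  show ?case
  proof (cases "x \<in> S")
    case True
    then have "survival K S s x = 0" for s
      by (cases s) (simp_all add: survival_0 survival_Suc)
    with True show ?thesis using vanishes[OF Suc.prems True] by simp
  next
    case False
    have "measure_pmf.expectation (K x) h
        = measure_pmf.expectation (K x) (\<lambda>y. (\<Sum>s<t. survival K S s y) + killed_iter K S h t y)"
      using closed[OF Suc.prems] Suc.IH by (intro integral_cong_AE AE_pmfI) auto
    also have "\<dots> = (\<Sum>s<t. measure_pmf.expectation (K x) (survival K S s))
                    + measure_pmf.expectation (K x) (killed_iter K S h t)"
      by (simp add: integral_add integral_sum integrable_survival integrable_remainder)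
    finally show ?thesis using harmonic[OF Suc.prems False] False
      by (simp add: survival_Suc survival_0 sum.lessThan_Suc_shift del: sum.lessThan_Suc)
  qed
qed simp

lemma remainder_le_survival: "x \<in> A \<Longrightarrow> killed_iter K S h t x \<le> B * survival K S t x"
proof -
  assume x: "x \<in> A"
  have "killed_iter K S h t x \<le> killed_iter K S (\<lambda>y. B * indicator (-S) y) t x"
    using closed nonneg bounded bound_nonneg vanishes x
    by (intro killed_iter_mono[where B=B]) (auto simp: indicator_def)
  then show ?thesis by (simp add: killed_iter_scale survival_def)
qed

lemma survival_le: "x \<in> A \<Longrightarrow> real (Suc t) * survival K S t x \<le> B"
proof -
  assume x: "x \<in> A"
  have "real (Suc t) * survival K S t x = (\<Sum>s<Suc t. survival K S t x)" by simp
  also have "\<dots> \<le> (\<Sum>s<Suc t. survival K S s x)"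
    by (intro sum_mono decseqD[OF survival_decseq]) simp
  also have "\<dots> \<le> h x"
    using potential_decomposition[OF x, of "Suc t"]
      remainder_bounds[of "Suc t" x] by linarith
  finally show ?thesis using bounded[of x] by linarith
qed

lemma expected_remainder_tendsto_0:
  assumes mu: "set_pmf mu \<subseteq> A"
  shows "(\<lambda>t. measure_pmf.expectation mu (killed_iter K S h t)) \<longlonglongrightarrow> 0"
proof (rule tendsto_sandwich[of "\<lambda>_. 0" _ _ "\<lambda>t. B * B / real (Suc t)"])
  have "killed_iter K S h t x \<le> B * B / real (Suc t)" if "x \<in> A" for t x
  proof -
    have "survival K S t x \<le> B / real (Suc t)"
      using survival_le[OF that, of t] by (simp add: field_simps)
    then have "B * survival K S t x \<le> B * (B / real (Suc t))"
      using bound_nonneg by (rule mult_left_mono)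
    then show ?thesis using remainder_le_survival[OF that, of t] by simp
  qed
  then show "\<forall>\<^sub>F t in sequentially.
      measure_pmf.expectation mu (killed_iter K S h t) \<le> B * B / real (Suc t)"
    using mu
    by (intro always_eventually allI measure_pmf.integral_le_const AE_pmfI integrable_remainder) auto
  show "\<forall>\<^sub>F t in sequentially. 0 \<le> measure_pmf.expectation mu (killed_iter K S h t)"
    using remainder_bounds by (intro always_eventually allI integral_nonneg_AE) auto
  show "(\<lambda>t. B * B / real (Suc t)) \<longlonglongrightarrow> 0"
    using LIMSEQ_Suc[OF lim_const_over_n[of "B * B"]] by simp
qed simp

theorem expected_hitting_time_eq:
  assumes mu: "set_pmf mu \<subseteq> A"
  shows "expected_hitting_time K mu S = ennreal (measure_pmf.expectation mu h)"
proof -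
  have partial_sums: "(\<Sum>s<t. not_hit_by K mu S s)
      = measure_pmf.expectation mu h - measure_pmf.expectation mu (killed_iter K S h t)" for t
  proof -
    have "(\<Sum>s<t. not_hit_by K mu S s) = measure_pmf.expectation mu (\<lambda>x. \<Sum>s<t. survival K S s x)"
      by (simp add: not_hit_by_eq_survival integral_sum integrable_survival)
    also have "\<dots> = measure_pmf.expectation mu (\<lambda>x. h x - killed_iter K S h t x)"
      using mu potential_decomposition by (intro integral_cong_AE AE_pmfI) (auto simp: algebra_simps)
    finally show ?thesis by (simp add: integrable_potential integrable_remainder)
  qed
  have "(\<lambda>t. not_hit_by K mu S t) sums measure_pmf.expectation mu h"
    unfolding sums_def partial_sums
    using tendsto_diff[OF tendsto_const expected_remainder_tendsto_0[OF mu]] by simp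
  moreover have "0 \<le> not_hit_by K mu S t" for t
    unfolding not_hit_by_def by simp
  ultimately show ?thesis
    unfolding expected_hitting_time_def by (metis suminf_ennreal2 sums_summable sums_unique)
qed

end

lemma expectation_prod_Pi_pmf_bounded:
  fixes f :: "'a \<Rightarrow> 'b \<Rightarrow> real"
  assumes "finite I" and bounded: "\<And>i v. \<bar>f i v\<bar> \<le> 1"
  shows "measure_pmf.expectation (Pi_pmf I d p) (\<lambda>y. \<Prod>i\<in>I. f i (y i))
       = (\<Prod>i\<in>I. measure_pmf.expectation (p i) (f i))"
  using \<open>finite I\<close>
proof (induction rule: finite_induct)
  case (insert i I)
  have prod_bounded: "\<bar>\<Prod>j\<in>J. f j (y j)\<bar> \<le> 1" for J y
    by (simp add: abs_prod prod_le_1 bounded)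
  have split_i: "(\<Prod>j\<in>insert i I. f j (if j = i then v else g j)) = f i v * (\<Prod>j\<in>I. f j (g j))"
    for g v
  proof -
    have "(\<Prod>j\<in>I. f j (if j = i then v else g j)) = (\<Prod>j\<in>I. f j (g j))"
      using insert.hyps by (intro prod.cong) auto
    then show ?thesis using insert.hyps by simp
  qed
  have "measure_pmf.expectation (Pi_pmf (insert i I) d p) (\<lambda>y. \<Prod>j\<in>insert i I. f j (y j))
      = (\<integral>v. (\<integral>g. f i v * (\<Prod>j\<in>I. f j (g j)) \<partial>Pi_pmf I d p) \<partial>p i)"
    unfolding Pi_pmf_insert'[OF insert.hyps]
    by (simp add: integral_bind_pmf_bounded[OF prod_bounded] split_i)
  also have "\<dots> = (\<Prod>j\<in>insert i I. measure_pmf.expectation (p j) (f j))"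
    using insert by simp
  finally show ?case .
qed simp

definition walsh :: "nat set \<Rightarrow> (nat \<Rightarrow> bool) \<Rightarrow> real" where
  "walsh T b = (\<Prod>i\<in>T. if b i then 1 else -1)"

definition rw_potential :: "nat \<Rightarrow> real \<Rightarrow> (nat \<Rightarrow> bool) \<Rightarrow> real" where
  "rw_potential l p b =
     (\<Sum>T\<in>Pow {0..<l} - {{}}. (1 - walsh T b) / (1 - (1 - 2 * p) ^ card T))"

definition rw_potential_bound :: "nat \<Rightarrow> real \<Rightarrow> real" where
  "rw_potential_bound l p = (\<Sum>T\<in>Pow {0..<l} - {{}}. 2 / (1 - (1 - 2 * p) ^ card T))"

lemma one_minus_power_pos:
  fixes p :: real
  assumes "0 < p" "p < 1" "0 < j"
  shows "0 < 1 - (1 - 2 * p) ^ j"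
proof -
  have "\<bar>1 - 2 * p\<bar> ^ j \<le> \<bar>1 - 2 * p\<bar>"
    using power_decreasing[of 1 j "\<bar>1 - 2 * p\<bar>"] assms by simp
  also have "\<dots> < 1" using assms by auto
  finally have "\<bar>(1 - 2 * p) ^ j\<bar> < 1" by (simp add: power_abs)
  then show ?thesis by linarith
qed

lemma abs_walsh_le: "\<bar>walsh T b\<bar> \<le> 1"
  unfolding walsh_def by (simp add: abs_prod prod_le_1)

lemma walsh_ones: "T \<subseteq> {0..<l} \<Longrightarrow> walsh T (ones l) = 1"
  unfolding walsh_def ones_def by (intro prod.neutral) auto

lemma card_pos_if_nonempty_subset: "T \<in> Pow {0..<l::nat} - {{}} \<Longrightarrow> 0 < card T"
  by (auto simp: card_gt_0_iff dest: finite_subset)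

lemma rw_potential_denominator_pos:
  fixes p :: real and l :: nat
  assumes "0 < p" "p < 1" "T \<in> Pow {0..<l} - {{}}"
  shows "0 < 1 - (1 - 2 * p) ^ card T"
  using one_minus_power_pos[OF assms(1,2) card_pos_if_nonempty_subset[OF assms(3)]] .

lemma rw_potential_nonneg: "0 < p \<Longrightarrow> p < 1 \<Longrightarrow> 0 \<le> rw_potential l p b"
  unfolding rw_potential_def using abs_walsh_le
  by (intro sum_nonneg divide_nonneg_pos rw_potential_denominator_pos) (auto simp: abs_le_iff)

lemma rw_potential_le:
  assumes "0 < p" "p < 1"
  shows "rw_potential l p b \<le> rw_potential_bound l p"
  unfolding rw_potential_def rw_potential_bound_def
proof (intro sum_mono divide_right_mono)
  fix T assume "T \<in> Pow {0..<l} - {{}}"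
  show "1 - walsh T b \<le> 2" using abs_walsh_le[of T b] by linarith
  show "0 \<le> 1 - (1 - 2 * p) ^ card T"
    using rw_potential_denominator_pos[OF assms \<open>T \<in> _\<close>] by linarith
qed

lemma rw_potential_ones: "rw_potential l p (ones l) = 0"
  unfolding rw_potential_def by (intro sum.neutral) (auto simp: walsh_ones)

lemma expectation_walsh_mutate:
  fixes p :: real
  assumes "0 \<le> p" "p \<le> 1" and T: "T \<subseteq> {0..<l}"
  shows "measure_pmf.expectation (mutate l p b) (walsh T) = walsh T b * (1 - 2 * p) ^ card T"
proof -
  define f where "f = (\<lambda>i v. if i \<in> T then (if b i \<noteq> v then 1 else -1) else (1::real))"
  have walsh_as_prod: "walsh T (\<lambda>i. b i \<noteq> w i) = (\<Prod>i\<in>{0..<l}. f i (w i))" for w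
    unfolding walsh_def f_def using T
    by (simp add: prod.If_cases Int_absorb1)
  have "measure_pmf.expectation (mutate l p b) (walsh T)
      = (\<Prod>i\<in>{0..<l}. measure_pmf.expectation (bernoulli_pmf p) (f i))"
    unfolding mutate_def integral_map_pmf walsh_as_prod
    by (rule expectation_prod_Pi_pmf_bounded) (auto simp: f_def)
  also have "\<dots> = (\<Prod>i\<in>{0..<l}. if i \<in> T then (if b i then 1 else -1) * (1 - 2 * p) else 1)"
    using assms by (intro prod.cong refl) (auto simp: f_def algebra_simps)
  also have "\<dots> = (\<Prod>i\<in>T. (if b i then 1 else -1) * (1 - 2 * p))"
    using T by (simp add: prod.If_cases Int_absorb1)
  finally show ?thesis by (simp add: walsh_def prod.distrib)
qed

lemma integrable_walsh: "integrable (measure_pmf M) (walsh T)"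
  using abs_walsh_le by (intro measure_pmf.integrable_const_bound[where B=1] AE_I2) auto

lemma sum_walsh_subsets_eq_0:
  assumes "b \<in> blocks l" "b \<noteq> ones l"
  shows "(\<Sum>T\<in>Pow {0..<l}. walsh T b) = 0"
proof -
  obtain i where i: "i < l" "\<not> b i"
    using assms unfolding blocks_def ones_def by (auto simp: fun_eq_iff)
  have "(\<Sum>T\<in>Pow {0..<l}. walsh T b) = (\<Prod>i\<in>{0..<l}. (if b i then 1 else -1) + 1)"
    unfolding walsh_def by (subst prod_add) auto
  also have "\<dots> = 0" using i by (intro prod_zero) auto
  finally show ?thesis .
qed

lemma expectation_rw_potential_mutate:
  fixes p :: real
  assumes "0 < p" "p < 1"
  shows "measure_pmf.expectation (mutate l p b) (rw_potential l p)
       = (\<Sum>T\<in>Pow {0..<l} - {{}}. (1 - walsh T b * (1 - 2 * p) ^ card T) / (1 - (1 - 2 * p) ^ card T))"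
proof -
  have "measure_pmf.expectation (mutate l p b) (rw_potential l p)
      = (\<Sum>T\<in>Pow {0..<l} - {{}}. (1 - measure_pmf.expectation (mutate l p b) (walsh T))
                                     / (1 - (1 - 2 * p) ^ card T))"
    unfolding rw_potential_def
    by (simp add: integral_sum integral_diff integrable_walsh integrable_diff)
  then show ?thesis
    using assms by (simp add: expectation_walsh_mutate)
qed

lemma rw_potential_harmonic:
  fixes p :: real
  assumes p: "0 < p" "p < 1" and b: "b \<in> blocks l" "b \<noteq> ones l"
  shows "rw_potential l p b = 1 + measure_pmf.expectation (rw_step l p b) (rw_potential l p)"
proof -
  let ?d = "\<lambda>T. 1 - (1 - 2 * p) ^ card T"
  have "rw_potential l p b - measure_pmf.expectation (rw_step l p b) (rw_potential l p)
      = (\<Sum>T\<in>Pow {0..<l} - {{}}. (1 - walsh T b) / ?d T - (1 - walsh T b * (1 - 2 * p) ^ card T) / ?d T)"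
    unfolding rw_step_def expectation_rw_potential_mutate[OF p] rw_potential_def sum_subtractf ..
  also have "\<dots> = (\<Sum>T\<in>Pow {0..<l} - {{}}. - walsh T b)"
  proof (rule sum.cong)
    fix T assume "T \<in> Pow {0..<l} - {{}}"
    then have "?d T \<noteq> 0" using rw_potential_denominator_pos[OF p] by (metis less_irrefl)
    moreover have "(1 - walsh T b) - (1 - walsh T b * (1 - 2 * p) ^ card T) = - walsh T b * ?d T"
      by (simp add: algebra_simps)
    ultimately show "(1 - walsh T b) / ?d T - (1 - walsh T b * (1 - 2 * p) ^ card T) / ?d T = - walsh T b"
      by (simp add: diff_divide_distrib[symmetric])
  qed simp
  also have "\<dots> = walsh {} b - (\<Sum>T\<in>Pow {0..<l}. walsh T b)"
    using sum_diff1[of "Pow {0..<l}" "\<lambda>T. - walsh T b" "{}"] by (simp add: sum_negf)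
  also have "\<dots> = 1"
    using sum_walsh_subsets_eq_0[OF b] by (simp add: walsh_def)
  finally show ?thesis by simp
qed

lemma blocks_eq_PiE_dflt: "blocks l = PiE_dflt {0..<l} False (\<lambda>_. UNIV)"
  unfolding blocks_def PiE_dflt_def by auto

lemma finite_blocks: "finite (blocks l)"
  unfolding blocks_eq_PiE_dflt by (intro finite_PiE_dflt) auto

lemma card_blocks: "card (blocks l) = 2 ^ l"
  unfolding blocks_eq_PiE_dflt by (subst card_PiE_dflt) auto

lemma ones_in_blocks: "ones l \<in> blocks l"
  unfolding blocks_def ones_def by auto

lemma rw_step_closed: "b \<in> blocks l \<Longrightarrow> set_pmf (rw_step l p b) \<subseteq> blocks l"
  using set_Pi_pmf_subset[of "{0..<l}" False "\<lambda>_. bernoulli_pmf p"]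
  unfolding rw_step_def mutate_def blocks_def by fastforce

lemma blocks_diff_ones_nonempty: "0 < l \<Longrightarrow> blocks l - {ones l} \<noteq> {}"
proof -
  assume "0 < l"
  then have "(\<lambda>_. False) \<in> blocks l - {ones l}"
    unfolding blocks_def ones_def by (auto simp: fun_eq_iff)
  then show ?thesis by blast
qed

lemma set_pmf_unif_nonones: "0 < l \<Longrightarrow> set_pmf (unif_nonones l) = blocks l - {ones l}"
  unfolding unif_nonones_def using finite_blocks blocks_diff_ones_nonempty by (intro set_pmf_of_set) auto

text \<open>Flipping a bit of \<open>T\<close> is an involution of \<open>blocks l\<close> that negates \<open>walsh T\<close>.\<close>
lemma sum_walsh_blocks_eq_0:
  fixes l :: nat
  assumes "T \<subseteq> {0..<l}" "T \<noteq> {}"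
  shows "(\<Sum>b\<in>blocks l. walsh T b) = 0"
proof -
  obtain i where i: "i \<in> T" "i < l" using assms by fastforce
  define flip where "flip b = b(i := \<not> b i)" for b :: "nat \<Rightarrow> bool"
  have "bij_betw flip (blocks l) (blocks l)"
    using i(2) by (intro bij_betwI[where g=flip]) (auto simp: flip_def blocks_def split: if_splits)
  then have "(\<Sum>b\<in>blocks l. walsh T b) = (\<Sum>b\<in>blocks l. walsh T (flip b))"
    by (rule sum.reindex_bij_betw[symmetric])
  also have "\<dots> = (\<Sum>b\<in>blocks l. - walsh T b)"
  proof (rule sum.cong)
    fix b
    have "finite T" using assms(1) finite_subset by blast
    then show "walsh T (flip b) = - walsh T b"
      unfolding walsh_def flip_def using i(1) by (simp add: prod.remove[of T i])
  qed simp
  finally show ?thesis by (simp add: sum_negf)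
qed

lemma sum_nonempty_subsets_by_card:
  fixes g :: "nat \<Rightarrow> real"
  shows "(\<Sum>T\<in>Pow {0..<l} - {{}}. g (card T)) = (\<Sum>j=1..l. real (l choose j) * g j)"
proof -
  let ?P = "Pow {0..<l} - {{}}"
  have card_range: "card ` ?P \<subseteq> {1..l}"
  proof
    fix j assume "j \<in> card ` ?P"
    then obtain T where T: "T \<in> ?P" "j = card T" by blast
    then have "card T \<le> l" using card_mono[of "{0..<l}" T] by auto
    with T show "j \<in> {1..l}" using card_pos_if_nonempty_subset[OF T(1)] by auto
  qed
  have "(\<Sum>T\<in>?P. g (card T)) = (\<Sum>j=1..l. \<Sum>T\<in>{T \<in> ?P. card T = j}. g (card T))"
    by (rule sum.group[symmetric]) (use card_range in auto)
  also have "\<dots> = (\<Sum>j=1..l. real (l choose j) * g j)"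
  proof (rule sum.cong)
    fix j assume "j \<in> {1..l}"
    then have "{T \<in> ?P. card T = j} = {T. T \<subseteq> {0..<l} \<and> card T = j}" by auto
    then show "(\<Sum>T\<in>{T \<in> ?P. card T = j}. g (card T)) = real (l choose j) * g j"
      by (simp add: n_subsets)
  qed simp
  finally show ?thesis .
qed

lemma expectation_rw_potential_unif_nonones:
  fixes p :: real
  assumes p: "0 < p" "p < 1" and "0 < l"
  shows "measure_pmf.expectation (unif_nonones l) (rw_potential l p)
       = 2 ^ l / (2 ^ l - 1) * (\<Sum>j=1..l. real (l choose j) / (1 - (1 - 2 * p) ^ j))"
proof -
  let ?d = "\<lambda>T. 1 - (1 - 2 * p) ^ card T"
  have card_nonones: "card (blocks l - {ones l}) = 2 ^ l - 1"
    using ones_in_blocks finite_blocks by (simp add: card_blocks)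
  have "measure_pmf.expectation (unif_nonones l) (rw_potential l p)
      = sum (rw_potential l p) (blocks l - {ones l}) / (2 ^ l - 1)"
    using blocks_diff_ones_nonempty[OF \<open>0 < l\<close>] card_nonones finite_blocks
    unfolding unif_nonones_def by (simp add: integral_pmf_of_set of_nat_diff)
  also have "sum (rw_potential l p) (blocks l - {ones l}) = sum (rw_potential l p) (blocks l)"
    using finite_blocks ones_in_blocks by (simp add: sum_diff1 rw_potential_ones)
  also have "\<dots> = (\<Sum>T\<in>Pow {0..<l} - {{}}. \<Sum>b\<in>blocks l. (1 - walsh T b) / ?d T)"
    unfolding rw_potential_def by (rule sum.swap)
  also have "\<dots> = (\<Sum>T\<in>Pow {0..<l} - {{}}. 2 ^ l / ?d T)"
  proof (rule sum.cong)
    fix T assume "T \<in> Pow {0..<l} - {{}}"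
    then show "(\<Sum>b\<in>blocks l. (1 - walsh T b) / ?d T) = 2 ^ l / ?d T"
      by (simp add: sum_divide_distrib[symmetric] sum_subtractf sum_walsh_blocks_eq_0 card_blocks)
  qed simp
  also have "\<dots> = (\<Sum>j=1..l. real (l choose j) * (2 ^ l / (1 - (1 - 2 * p) ^ j)))"
    by (rule sum_nonempty_subsets_by_card)
  also have "\<dots> = 2 ^ l * (\<Sum>j=1..l. real (l choose j) / (1 - (1 - 2 * p) ^ j))"
    by (simp add: sum_distrib_left mult.commute)
  finally show ?thesis by simp
qed

lemma BLO_eq_card: "BLO n l x = card {j \<in> {1..n div l}. \<forall>i<j * l. x i}"
proof -
  have "(\<Prod>i<N. if x i then 1 else 0 :: nat) = (if \<forall>i<N. x i then 1 else 0)" for N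
    by (induction N) (auto simp: less_Suc_eq)
  then show ?thesis
    unfolding BLO_def by (simp add: sum.If_cases Int_def)
qed

lemma BLO_ge_iff:
  assumes "j \<le> n div l"
  shows "j \<le> BLO n l x \<longleftrightarrow> (\<forall>i<j * l. x i)"
proof
  let ?J = "{j \<in> {1..n div l}. \<forall>i<j * l. x i}"
  have prefix_mono: "\<forall>i<j' * l. x i \<Longrightarrow> j \<le> j' \<Longrightarrow> \<forall>i<j * l. x i" for j j'
    by (meson le_less_trans mult_le_mono1 not_le)
  {
    assume "\<forall>i<j * l. x i"
    then have "{1..j} \<subseteq> ?J" using assms prefix_mono by auto
    then show "j \<le> BLO n l x"
      unfolding BLO_eq_card using card_mono[of ?J "{1..j}"] by simp
  next
    assume le: "j \<le> BLO n l x"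
    show "\<forall>i<j * l. x i"
    proof (rule ccontr)
      assume not_prefix: "\<not> (\<forall>i<j * l. x i)"
      have "?J \<subseteq> {1..<j}"
      proof
        fix j' assume j': "j' \<in> ?J"
        then have "\<not> j \<le> j'" using prefix_mono[of j' j] not_prefix by blast
        with j' show "j' \<in> {1..<j}" by simp
      qed
      then have "BLO n l x \<le> j - 1"
        unfolding BLO_eq_card using card_mono[of "{1..<j}" ?J] by simp
      with le not_prefix show False by (cases j) auto
    qed
  }
qed

definition block_at :: "nat \<Rightarrow> nat \<Rightarrow> (nat \<Rightarrow> bool) \<Rightarrow> nat \<Rightarrow> bool" where
  "block_at k l w = (\<lambda>j. if j < l then w (k + j) else False)"

lemma BLO_gt_iff_block_ones:
  assumes "k = m * l" "m < n div l" and prefix: "\<forall>i<k. y i"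
  shows "m < BLO n l y \<longleftrightarrow> block_at k l y = ones l"
proof -
  have "m < BLO n l y \<longleftrightarrow> (\<forall>i<k + l. y i)"
    using BLO_ge_iff[of "Suc m" n l y] assms by (simp add: Suc_le_eq add.commute)
  also have "\<dots> \<longleftrightarrow> (\<forall>j<l. y (k + j))"
    using prefix by (metis add_less_cancel_left le_add_diff_inverse not_le trans_less_add1)
  also have "\<dots> \<longleftrightarrow> block_at k l y = ones l"
    unfolding block_at_def ones_def by (auto simp: fun_eq_iff)
  finally show ?thesis .
qed

lemma map_Pi_pmf_all_False:
  fixes p :: real
  assumes "0 \<le> p" "p \<le> 1" "finite I"
  shows "map_pmf (\<lambda>w. \<forall>i\<in>I. \<not> w i) (Pi_pmf I False (\<lambda>_. bernoulli_pmf p))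
       = bernoulli_pmf ((1 - p) ^ card I)"
proof (rule pmf_eqI)
  let ?M = "map_pmf (\<lambda>w. \<forall>i\<in>I. \<not> w i) (Pi_pmf I False (\<lambda>_. bernoulli_pmf p))"
  have "(\<lambda>w. \<forall>i\<in>I. \<not> w i) -` {True} = Pi I (\<lambda>_. {False})"
    by (auto simp: Pi_def)
  then have "pmf ?M True = (\<Prod>i\<in>I. measure_pmf.prob (bernoulli_pmf p) {False})"
    using assms(3) by (simp add: pmf_map measure_Pi_pmf_Pi)
  also have "\<dots> = (1 - p) ^ card I"
    using assms by (simp add: measure_pmf_single)
  finally have True: "pmf ?M True = (1 - p) ^ card I" .
  have "0 \<le> (1 - p) ^ card I" "(1 - p) ^ card I \<le> 1"
    using assms by (auto intro: power_le_one)
  then show "pmf ?M b = pmf (bernoulli_pmf ((1 - p) ^ card I)) b" for b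
    by (cases b) (simp_all add: pmf_False_conv_True[of ?M] True)
qed

lemma map_Pi_pmf_block_at:
  assumes "k + l \<le> n"
  shows "map_pmf (block_at k l) (Pi_pmf {k..<n} False (\<lambda>_. q)) = Pi_pmf {0..<l} False (\<lambda>_. q)"
proof -
  let ?restrict = "\<lambda>g i. if i \<in> {k..<k + l} then g i else False"
  have block: "(\<lambda>g. ?restrict g \<circ> (\<lambda>j. j + k)) = block_at k l"
    by (auto simp: block_at_def fun_eq_iff add.commute)
  have "bij_betw (\<lambda>j. j + k) {0..<l} {k..<k + l}"
    by (intro bij_betwI[where g="\<lambda>i. i - k"]) auto
  then have "Pi_pmf {0..<l} False (\<lambda>_. q)
      = map_pmf (\<lambda>g. g \<circ> (\<lambda>j. j + k)) (Pi_pmf {k..<k + l} False (\<lambda>_. q))"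
    by (intro Pi_pmf_bij_betw) auto
  also have "Pi_pmf {k..<k + l} False (\<lambda>_. q) = map_pmf ?restrict (Pi_pmf {k..<n} False (\<lambda>_. q))"
    using assms by (intro Pi_pmf_subset) auto
  also have "map_pmf (\<lambda>g. g \<circ> (\<lambda>j. j + k)) (map_pmf ?restrict (Pi_pmf {k..<n} False (\<lambda>_. q)))
      = map_pmf (block_at k l) (Pi_pmf {k..<n} False (\<lambda>_. q))"
    by (simp only: map_pmf_comp block)
  finally show ?thesis by (rule sym)
qed

lemma mutation_prefix_block_split:
  fixes p :: real
  assumes "0 \<le> p" "p \<le> 1" "k + l \<le> n"
  shows "map_pmf (\<lambda>w. (\<forall>i<k. \<not> w i, block_at k l w)) (Pi_pmf {0..<n} False (\<lambda>_. bernoulli_pmf p))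
       = pair_pmf (bernoulli_pmf ((1 - p) ^ k)) (Pi_pmf {0..<l} False (\<lambda>_. bernoulli_pmf p))"
proof -
  let ?W = "\<lambda>I. Pi_pmf I False (\<lambda>_. bernoulli_pmf p)"
  have "{0..<n} = {..<k} \<union> {k..<n}" using assms by auto
  then have "?W {0..<n}
      = map_pmf (\<lambda>(f, g) i. if i \<in> {..<k} then f i else g i) (pair_pmf (?W {..<k}) (?W {k..<n}))"
    by (simp only:) (rule Pi_pmf_union; auto)
  then have "map_pmf (\<lambda>w. (\<forall>i<k. \<not> w i, block_at k l w)) (?W {0..<n})
      = map_pmf (\<lambda>(f, g). ((\<lambda>w. \<forall>i\<in>{..<k}. \<not> w i) f, block_at k l g))
          (pair_pmf (?W {..<k}) (?W {k..<n}))"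
    by (simp add: map_pmf_comp case_prod_unfold block_at_def Ball_def)
  also have "\<dots> = pair_pmf (bernoulli_pmf ((1 - p) ^ k)) (?W {0..<l})"
    using assms by (simp add: map_pair map_Pi_pmf_all_False map_Pi_pmf_block_at)
  finally show ?thesis .
qed

lemma ea_step_BLO_mono: "y \<in> set_pmf (ea_step n l p x) \<Longrightarrow> BLO n l x \<le> BLO n l y"
  unfolding ea_step_def by auto

definition ea_potential :: "nat \<Rightarrow> real \<Rightarrow> nat \<Rightarrow> (nat \<Rightarrow> bool) \<Rightarrow> real" where
  "ea_potential l p k y = rw_potential l p (block_at k l y) / (1 - p) ^ k"

lemma block_end_le_length: "k = m * l \<Longrightarrow> m < n div l \<Longrightarrow> k + l \<le> (n::nat)"
proof -
  assume k: "k = m * l" "m < n div l"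
  then have "k + l = Suc m * l" by simp
  also have "\<dots> \<le> n div l * l" using k by (intro mult_right_mono) auto
  also have "\<dots> \<le> n" by (rule div_times_less_eq_dividend)
  finally show ?thesis .
qed

lemma expectation_ea_step_block:
  fixes p :: real and g :: "(nat \<Rightarrow> bool) \<Rightarrow> real"
  assumes p: "0 < p" "p < 1" and k: "k = m * l" "m < n div l"
    and prefix: "\<forall>i<k. x i" and not_hit: "\<not> m < BLO n l x"
    and bounded: "\<And>v. \<bar>g v\<bar> \<le> B"
  shows "measure_pmf.expectation (ea_step n l p x) (\<lambda>y. g (block_at k l y))
       = (1 - p) ^ k * measure_pmf.expectation (rw_step l p (block_at k l x)) g
         + (1 - (1 - p) ^ k) * g (block_at k l x)"
proof -
  define b where "b = block_at k l x"
  define G where "G = (\<lambda>(c, v). g (if c then (\<lambda>j. b j \<noteq> v j) else b))"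
  let ?R = "Pi_pmf {0..<l} False (\<lambda>_. bernoulli_pmf p)"
  have "BLO n l x = m"
    using BLO_ge_iff[of m n l x] k prefix not_hit by auto
  then have accept: "BLO n l x \<le> BLO n l (\<lambda>i. x i \<noteq> w i) \<longleftrightarrow> (\<forall>i<k. \<not> w i)" for w
    using BLO_ge_iff[of m n l] k prefix by auto
  have offspring:
    "g (block_at k l (if BLO n l x \<le> BLO n l (\<lambda>i. x i \<noteq> w i) then (\<lambda>i. x i \<noteq> w i) else x))
      = G (\<forall>i<k. \<not> w i, block_at k l w)" for w
    unfolding accept G_def b_def by (auto simp: block_at_def)
  have "measure_pmf.expectation (ea_step n l p x) (\<lambda>y. g (block_at k l y))
      = measure_pmf.expectation (Pi_pmf {0..<n} False (\<lambda>_. bernoulli_pmf p))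
          (\<lambda>w. G (\<forall>i<k. \<not> w i, block_at k l w))"
    unfolding ea_step_def mutate_def map_pmf_comp integral_map_pmf offspring ..
  also have "\<dots> = measure_pmf.expectation (pair_pmf (bernoulli_pmf ((1 - p) ^ k)) ?R) G"
    using p block_end_le_length[OF k] by (subst mutation_prefix_block_split[symmetric]) auto
  also have "\<dots> = (1 - p) ^ k * measure_pmf.expectation ?R (\<lambda>v. G (True, v))
                  + (1 - (1 - p) ^ k) * measure_pmf.expectation ?R (\<lambda>v. G (False, v))"
    using p bounded by (subst expectation_pair_pmf[where B=B]) (auto simp: G_def power_le_one)
  finally show ?thesis
    by (simp add: G_def b_def rw_step_def mutate_def)
qed

lemma ea_potential_harmonic:
  fixes p :: real
  assumes p: "0 < p" "p < 1" and k: "k = m * l" "m < n div l"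
    and prefix: "\<forall>i<k. x i" and not_hit: "\<not> m < BLO n l x"
  shows "ea_potential l p k x = 1 + measure_pmf.expectation (ea_step n l p x) (ea_potential l p k)"
proof -
  define q where "q = (1 - p) ^ k"
  define b where "b = block_at k l x"
  let ?h = "rw_potential l p"
  have "0 < q" unfolding q_def using p by simp
  have b: "b \<in> blocks l" "b \<noteq> ones l"
    using BLO_gt_iff_block_ones[OF k prefix] not_hit unfolding b_def blocks_def block_at_def by auto
  have "\<bar>?h v / q\<bar> \<le> rw_potential_bound l p / q" for v
    using rw_potential_nonneg[OF p] rw_potential_le[OF p] \<open>0 < q\<close>
    by (simp add: abs_of_nonneg divide_right_mono)
  then have "measure_pmf.expectation (ea_step n l p x) (ea_potential l p k)
      = q * measure_pmf.expectation (rw_step l p b) (\<lambda>v. ?h v / q) + (1 - q) * (?h b / q)"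
    unfolding ea_potential_def q_def b_def by (rule expectation_ea_step_block[OF p k prefix not_hit])
  also have "\<dots> = ?h b - 1 + (1 - q) * (?h b / q)"
    using rw_potential_harmonic[OF p b] \<open>0 < q\<close> by simp
  finally show ?thesis
    using \<open>0 < q\<close> unfolding ea_potential_def q_def[symmetric] b_def[symmetric] by (simp add: field_simps)
qed

lemma expected_hitting_time_rw_step:
  fixes p :: real
  assumes p: "0 < p" "p < 1" and "0 < l"
  shows "expected_hitting_time (rw_step l p) (unif_nonones l) {ones l}
       = ennreal (measure_pmf.expectation (unif_nonones l) (rw_potential l p))"
proof -
  interpret hitting_potential "rw_step l p" "blocks l" "{ones l}" "rw_potential l p"
      "rw_potential_bound l p"
    using rw_step_closed rw_potential_nonneg[OF p] rw_potential_le[OF p] rw_potential_ones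
      rw_potential_harmonic[OF p] by unfold_locales auto
  show ?thesis
    using set_pmf_unif_nonones[OF \<open>0 < l\<close>] by (intro expected_hitting_time_eq) auto
qed

lemma expected_hitting_time_ea_step:
  fixes p :: real
  assumes p: "0 < p" "p < 1" and "0 < l" and k: "k = m * l" "m < n div l"
  shows "expected_hitting_time (ea_step n l p) (map_pmf (init_ind n l k z) (unif_nonones l))
           {x. m < BLO n l x}
       = ennreal (measure_pmf.expectation (unif_nonones l) (rw_potential l p) / (1 - p) ^ k)"
proof -
  have prefix_iff: "(\<forall>i<k. y i) \<longleftrightarrow> m \<le> BLO n l y" for y
    using BLO_ge_iff[of m n l y] k by simp
  interpret hitting_potential "ea_step n l p" "{y. \<forall>i<k. y i}" "{x. m < BLO n l x}"
      "ea_potential l p k" "rw_potential_bound l p / (1 - p) ^ k"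
  proof
    show "set_pmf (ea_step n l p x) \<subseteq> {y. \<forall>i<k. y i}" if "x \<in> {y. \<forall>i<k. y i}" for x
    proof
      fix y assume "y \<in> set_pmf (ea_step n l p x)"
      then have "BLO n l x \<le> BLO n l y" by (rule ea_step_BLO_mono)
      with that show "y \<in> {y. \<forall>i<k. y i}" unfolding prefix_iff by simp
    qed
    show "0 \<le> ea_potential l p k x" for x
      unfolding ea_potential_def using p by (intro divide_nonneg_pos rw_potential_nonneg[OF p]) simp
    show "ea_potential l p k x \<le> rw_potential_bound l p / (1 - p) ^ k" for x
      unfolding ea_potential_def using p by (intro divide_right_mono rw_potential_le[OF p]) simp
    show "ea_potential l p k x = 0" if "x \<in> {y. \<forall>i<k. y i}" "x \<in> {x. m < BLO n l x}" for x
      using that BLO_gt_iff_block_ones[OF k] by (simp add: ea_potential_def rw_potential_ones)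
    show "ea_potential l p k x = 1 + measure_pmf.expectation (ea_step n l p x) (ea_potential l p k)"
      if "x \<in> {y. \<forall>i<k. y i}" "x \<notin> {x. m < BLO n l x}" for x
      using that ea_potential_harmonic[OF p k] by simp
  qed
  have "block_at k l (init_ind n l k z b) = b" if "b \<in> blocks l" for b
    using that unfolding block_at_def init_ind_def blocks_def by (auto simp: fun_eq_iff)
  moreover have "set_pmf (unif_nonones l) \<subseteq> blocks l"
    using set_pmf_unif_nonones[OF \<open>0 < l\<close>] by simp
  ultimately have
    "measure_pmf.expectation (map_pmf (init_ind n l k z) (unif_nonones l)) (ea_potential l p k)
      = measure_pmf.expectation (unif_nonones l) (\<lambda>b. rw_potential l p b / (1 - p) ^ k)"
    unfolding integral_map_pmf ea_potential_def by (intro integral_cong_AE AE_pmfI) auto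
  then show ?thesis
    by (subst expected_hitting_time_eq) (auto simp: init_ind_def)
qed

theorem mainTheorem11:
  fixes n l m k :: nat and p :: real and z :: "nat \<Rightarrow> bool"
  assumes "0 < n" and "0 < l" and "l dvd n"
    and "k = m * l" and "m < n div l"
    and "0 < p" and "p < 1"
  shows "expected_hitting_time (ea_step n l p)
           (map_pmf (init_ind n l k z) (unif_nonones l)) {x. BLO n l x > m}
         = expected_hitting_time (rw_step l p) (unif_nonones l) {ones l}
             / ennreal ((1 - p) ^ k)
       \<and> expected_hitting_time (ea_step n l p)
           (map_pmf (init_ind n l k z) (unif_nonones l)) {x. BLO n l x > m}
         = ennreal (2 ^ l / (2 ^ l - 1) / (1 - p) ^ k
             * (\<Sum>j=1..l. real (l choose j) / (1 - (1 - 2 * p) ^ j)))"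
proof -
  note p = \<open>0 < p\<close> \<open>p < 1\<close>
  define H where "H = measure_pmf.expectation (unif_nonones l) (rw_potential l p)"
  have "0 \<le> H"
    unfolding H_def using rw_potential_nonneg[OF p] by (intro integral_nonneg_AE) auto
  moreover have "0 < (1 - p) ^ k" using p by simp
  ultimately show ?thesis
    using expected_hitting_time_ea_step[OF p \<open>0 < l\<close> \<open>k = m * l\<close> \<open>m < n div l\<close>, of z]
      expected_hitting_time_rw_step[OF p \<open>0 < l\<close>]
      expectation_rw_potential_unif_nonones[OF p \<open>0 < l\<close>]
    by (simp add: H_def[symmetric] divide_ennreal)
qed

end
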